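(* Let $\mathcal R^{rrc}$ be a rich single-crossing domain of restricted classical preferences, $[\underline R,\overline R]\subseteq\mathcal R^{rrc}$ a closed interval, and $F:[\underline R,\overline R]\to\mathbb{Z}$ a mechanism (so $F(R)\in[0,t_R]\times[0,1]$ for all $R$) with finite range such that $F(R)\,I\,(0,0)$ implies $F(R)=(0,0)$. Then $F$ is restricted strategy-proof if and only if $F$ is monotone and $V^F$ is continuous.
   Context: $\mathbb{Z}=[0,\infty)\times[0,1]$; $(t',q')<(t'',q'')$ means $t'<t''$, $q'<q''$; $x\le y$ means $x=y$ or $x<y$; $\square(z)=\{x:x\le z\}$. A restricted classical preference is a complete transitive relation $R$ (strict part $P$, indifference $I$) on $[0,t_R]\times[0,1]$, $0<t_R<\infty$, such that: for $q\in(0,1]$, $t_R\ge t''>t'\ge0$ implies $(t',q)P(t'',q)$; for $t\in[0,t_R)$, $1\ge q''>q'\ge0$ implies $(t,q'')P(t,q')$; $(0,0)I(t_R,q)$ for all $q$ and $(0,0)I(t,0)$ for $t\in[0,t_R)$; $R$ is continuous on $[0,t_R]\times[0,1]$. Two such $R',R''$ with $t_{R'}\ne t_{R''}$ satisfy single-crossing if for every $(t,q)$ with $q>0$, $t<\min\{t_{R'},t_{R''}\}$ their indifference sets through $(t,q)$ meet only at $(t,q)$. A rich single-crossing domain $\mathcal R^{rrc}$ is a set of pairwise single-crossing restricted classical preferences such that for all $x'<x''$ some member is indifferent between them. It is ordered by $R'\prec R''$ iff $t_{R'}<t_{R''}$ (this coincides with $R''$ cutting $R'$ from above, i.e. $\square(z)\cap\{x:xR''z\}\subseteq\square(z)\cap\{x:xR'z\}$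 at bundles $z=(t,q)$ with $q>0,t<t_{R'}$), with the corresponding order topology; $[\underline R,\overline R]=\{R:\underline R\precsim R\precsim\overline R\}$. A mechanism is $F:[\underline R,\overline R]\to\mathbb{Z}$ with $F(R)\in[0,t_R]\times[0,1]$. $F$ is restricted strategy-proof if for all $R,R'$ with $F(R')\in[0,t_R]\times[0,1]$, $F(R)\,R\,F(R')$. $F$ is monotone if $R'\prec R''$ implies $F(R')\le F(R'')$. $V^F$ is continuous if for any $R$ and any monotone sequence $R^n\to R$ (i.e. $R^n\precsim R^{n+1}$ for all $n$, or $R^{n+1}\precsim R^n$ for all $n$), $F(R^n)$ converges to some $z=(t_z,q_z)$ with $t_z\le t_R$ and $z\,I\,F(R)$. *)

theory Defs
  imports "HOL-Analysis.Analysis"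
begin

type_synonym bndl = "real \<times> real"

text \<open>A preference is represented as a pair (t_R, R) where R is a relation on bundles,
  meant to be defined on the domain [0,t_R] x [0,1].\<close>
type_synonym pref = "real \<times> (bndl \<Rightarrow> bndl \<Rightarrow> bool)"

definition consumption_set :: "bndl set" where
  "consumption_set = {(t, q). 0 \<le> t \<and> 0 \<le> q \<and> q \<le> 1}"

definition pdom :: "real \<Rightarrow> bndl set" where
  "pdom tR = {(t, q). 0 \<le> t \<and> t \<le> tR \<and> 0 \<le> q \<and> q \<le> 1}"

definition bless :: "bndl \<Rightarrow> bndl \<Rightarrow> bool" where
  "bless x y \<longleftrightarrow> fst x < fst y \<and> snd x < snd y"

definition ble :: "bndl \<Rightarrow> bndl \<Rightarrow> bool" where
  "ble x y \<longleftrightarrow> x = y \<or> bless x y"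

definition strict :: "(bndl \<Rightarrow> bndl \<Rightarrow> bool) \<Rightarrow> bndl \<Rightarrow> bndl \<Rightarrow> bool" where
  "strict R x y \<longleftrightarrow> R x y \<and> \<not> R y x"

definition indiff :: "(bndl \<Rightarrow> bndl \<Rightarrow> bool) \<Rightarrow> bndl \<Rightarrow> bndl \<Rightarrow> bool" where
  "indiff R x y \<longleftrightarrow> R x y \<and> R y x"

definition restricted_classical :: "pref \<Rightarrow> bool" where
  "restricted_classical P \<longleftrightarrow> (case P of (tR, R) \<Rightarrow>
     0 < tR \<and>
     (\<forall>x y. R x y \<longrightarrow> x \<in> pdom tR \<and> y \<in> pdom tR) \<and>
     (\<forall>x\<in>pdom tR. \<forall>y\<in>pdom tR. R x y \<or> R y x) \<and>
     (\<forall>x y z. R x y \<longrightarrow> R y z \<longrightarrow> R x z) \<and>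
     (\<forall>q t' t''. 0 < q \<and> q \<le> 1 \<and> 0 \<le> t' \<and> t' < t'' \<and> t'' \<le> tR
        \<longrightarrow> strict R (t', q) (t'', q)) \<and>
     (\<forall>t q' q''. 0 \<le> t \<and> t < tR \<and> 0 \<le> q' \<and> q' < q'' \<and> q'' \<le> 1
        \<longrightarrow> strict R (t, q'') (t, q')) \<and>
     (\<forall>q. 0 \<le> q \<and> q \<le> 1 \<longrightarrow> indiff R (0, 0) (tR, q)) \<and>
     (\<forall>t. 0 \<le> t \<and> t < tR \<longrightarrow> indiff R (0, 0) (t, 0)) \<and>
     (\<forall>z\<in>pdom tR. closed {x. R x z} \<and> closed {x. R z x}))"

definition indiff_set :: "pref \<Rightarrow> bndl \<Rightarrow> bndl set" where
  "indiff_set P z = {x. indiff (snd P) x z}"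

definition single_crossing :: "pref \<Rightarrow> pref \<Rightarrow> bool" where
  "single_crossing P1 P2 \<longleftrightarrow> fst P1 \<noteq> fst P2 \<and>
     (\<forall>t q. 0 < q \<and> q \<le> 1 \<and> 0 \<le> t \<and> t < min (fst P1) (fst P2) \<longrightarrow>
        indiff_set P1 (t, q) \<inter> indiff_set P2 (t, q) = {(t, q)})"

definition rich_single_crossing_domain :: "pref set \<Rightarrow> bool" where
  "rich_single_crossing_domain D \<longleftrightarrow>
     (\<forall>P\<in>D. restricted_classical P) \<and>
     (\<forall>P1\<in>D. \<forall>P2\<in>D. P1 \<noteq> P2 \<longrightarrow> single_crossing P1 P2) \<and>
     (\<forall>x'\<in>consumption_set. \<forall>x''\<in>consumption_set. bless x' x'' \<longrightarrow>
        (\<exists>P\<in>D. indiff (snd P) x' x''))"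

text \<open>Order R' \<prec> R'' iff t_R' < t_R''; closed interval [lo, hi] in D.\<close>
definition pref_interval :: "pref set \<Rightarrow> pref \<Rightarrow> pref \<Rightarrow> pref set" where
  "pref_interval D lo hi = {P\<in>D. fst lo \<le> fst P \<and> fst P \<le> fst hi}"

text \<open>Convergence of a sequence to P in the order topology of (D, \<prec>).\<close>
definition order_converges :: "pref set \<Rightarrow> (nat \<Rightarrow> pref) \<Rightarrow> pref \<Rightarrow> bool" where
  "order_converges D S P \<longleftrightarrow>
     (\<forall>A\<in>D. fst A < fst P \<longrightarrow> (\<forall>\<^sub>F n in sequentially. fst A < fst (S n))) \<and>
     (\<forall>A\<in>D. fst P < fst A \<longrightarrow> (\<forall>\<^sub>F n in sequentially. fst (S n) < fst A))"

definition is_mechanism :: "pref set \<Rightarrow> (pref \<Rightarrow> bndl) \<Rightarrow> bool" where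
  "is_mechanism Iv F \<longleftrightarrow> (\<forall>P\<in>Iv. F P \<in> pdom (fst P))"

definition restricted_strategy_proof :: "pref set \<Rightarrow> (pref \<Rightarrow> bndl) \<Rightarrow> bool" where
  "restricted_strategy_proof Iv F \<longleftrightarrow>
     (\<forall>P\<in>Iv. \<forall>P'\<in>Iv. F P' \<in> pdom (fst P) \<longrightarrow> snd P (F P) (F P'))"

definition monotone_mech :: "pref set \<Rightarrow> (pref \<Rightarrow> bndl) \<Rightarrow> bool" where
  "monotone_mech Iv F \<longleftrightarrow>
     (\<forall>P'\<in>Iv. \<forall>P''\<in>Iv. fst P' < fst P'' \<longrightarrow> ble (F P') (F P''))"

definition VF_continuous :: "pref set \<Rightarrow> pref set \<Rightarrow> (pref \<Rightarrow> bndl) \<Rightarrow> bool" where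
  "VF_continuous D Iv F \<longleftrightarrow>
     (\<forall>P\<in>Iv. \<forall>S. (\<forall>n. S n \<in> Iv) \<longrightarrow>
        ((\<forall>n. fst (S n) \<le> fst (S (Suc n))) \<or> (\<forall>n. fst (S (Suc n)) \<le> fst (S n))) \<longrightarrow>
        order_converges D S P \<longrightarrow>
        (\<exists>z. (\<lambda>n. F (S n)) \<longlonglongrightarrow> z \<and> fst z \<le> fst P \<and> indiff (snd P) z (F P)))"

end

theory Submission
  imports Defs
begin

text \<open>Single crossing makes the ranking of two bundles \<open>x < y\<close> monotone in the type: if one type
  is indifferent between them, higher types strictly prefer \<open>y\<close> and lower types strictly prefer
  \<open>x\<close>. To see this, follow the indifference curves of two types through points \<open>(s, r)\<close> back to
  a fixed payment; the resulting quantities depend continuously on \<open>s\<close>, so a reversal of the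
  ranking would, by the intermediate value theorem, make the two indifference curves cross twice.

  Strategy-proofness then forces monotonicity by comparing the reports of two types, and continuity
  of \<open>V\<^sup>F\<close> because along a monotone sequence of types the outcome is eventually constant
  (finite range), while the type indifferent between that outcome and \<open>F(R)\<close> is squeezed
  towards \<open>R\<close>. Conversely, if some type gained by misreporting, choose among its profitable
  outcomes one with extremal payment; at the end of the interval of types receiving it, continuity of
  \<open>V\<^sup>F\<close> produces a type indifferent between it and a larger (resp. smaller) outcome that the
  deviating type cannot strictly prefer, and single crossing turns this into a contradiction.\<close>

section \<open>Monotone sequences and functions of a real variable\<close>

lemma incseq_finite_range_eventually_const:
  fixes f :: "nat \<Rightarrow> 'a::linorder"
  assumes "incseq f" and "finite (range f)"
  shows "\<exists>N. \<forall>n\<ge>N. f n = f N"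
proof -
  obtain N where N: "f N = Max (range f)" using Max_in[OF assms(2)] by auto
  have "f n = f N" if "N \<le> n" for n
    using N Max_ge[OF assms(2), of "f n"] monoD[OF assms(1) that] by simp
  then show ?thesis by blast
qed

lemma tendsto_finite_range_eventually_eq:
  fixes f :: "nat \<Rightarrow> 'a::t1_space"
  assumes "finite K" and "\<And>n. f n \<in> K" and "f \<longlonglongrightarrow> z"
  shows "\<forall>\<^sub>F n in sequentially. f n = z"
proof -
  have "open (- (K - {z}))" using assms(1) by (intro open_Compl finite_imp_closed) simp
  then have "\<forall>\<^sub>F n in sequentially. f n \<in> - (K - {z})"
    by (rule topological_tendstoD[OF assms(3)]) simp
  then show ?thesis by (rule eventually_mono) (use assms(2) in auto)
qed

lemma finite_image_has_max:
  fixes g :: "'a \<Rightarrow> 'b::linorder"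
  assumes "finite (g ` A)" and "a \<in> A"
  obtains a' where "a' \<in> A" and "\<And>u. u \<in> A \<Longrightarrow> g u \<le> g a'"
proof -
  have "Max (g ` A) \<in> g ` A" using assms by (intro Max_in) auto
  then obtain a' where "a' \<in> A" "g a' = Max (g ` A)" by (metis imageE)
  moreover have "g u \<le> Max (g ` A)" if "u \<in> A" for u using assms(1) that by (intro Max_ge) auto
  ultimately show thesis using that by metis
qed

lemma finite_image_has_min:
  fixes g :: "'a \<Rightarrow> 'b::linorder"
  assumes "finite (g ` A)" and "a \<in> A"
  obtains a' where "a' \<in> A" and "\<And>u. u \<in> A \<Longrightarrow> g a' \<le> g u"
proof -
  have "Min (g ` A) \<in> g ` A" using assms by (intro Min_in) auto
  then obtain a' where "a' \<in> A" "g a' = Min (g ` A)" by (metis imageE)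
  moreover have "Min (g ` A) \<le> g u" if "u \<in> A" for u using assms(1) that by (intro Min_le) auto
  ultimately show thesis using that by metis
qed

lemma approach_from_above:
  fixes b c :: real
  assumes "b < c"
  shows "\<exists>\<sigma>. (\<forall>n. b < \<sigma> n \<and> \<sigma> n \<le> c \<and> \<sigma> (Suc n) \<le> \<sigma> n) \<and> \<sigma> \<longlonglongrightarrow> b"
proof (intro exI conjI allI)
  let ?\<sigma> = "\<lambda>n. b + (c - b) / real (Suc n)"
  fix n
  show "b < ?\<sigma> n" "?\<sigma> (Suc n) \<le> ?\<sigma> n" using assms by (simp_all add: frac_le)
  have "(c - b) / real (Suc n) \<le> (c - b) / 1" using assms by (intro divide_left_mono) auto
  then show "?\<sigma> n \<le> c" by simp
next
  show "(\<lambda>n. b + (c - b) / real (Suc n)) \<longlonglongrightarrow> b"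
    using tendsto_add[OF tendsto_const LIMSEQ_Suc[OF lim_const_over_n[of "c - b"]]] by simp
qed

lemma approach_from_below:
  fixes a b :: real
  assumes "a < b"
  shows "\<exists>\<sigma>. (\<forall>n. a \<le> \<sigma> n \<and> \<sigma> n < b \<and> \<sigma> n \<le> \<sigma> (Suc n)) \<and> \<sigma> \<longlonglongrightarrow> b"
proof -
  obtain \<sigma> where \<sigma>: "\<And>n. - b < \<sigma> n \<and> \<sigma> n \<le> - a \<and> \<sigma> (Suc n) \<le> \<sigma> n" "\<sigma> \<longlonglongrightarrow> - b"
    using approach_from_above[of "- b" "- a"] assms by auto
  have "a \<le> - \<sigma> n \<and> - \<sigma> n < b \<and> - \<sigma> n \<le> - \<sigma> (Suc n)" for n using \<sigma>(1)[of n] by linarith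
  moreover have "(\<lambda>n. - \<sigma> n) \<longlonglongrightarrow> b" using tendsto_minus[OF \<sigma>(2)] by simp
  ultimately show ?thesis by (intro exI[of _ "\<lambda>n. - \<sigma> n"]) simp
qed

lemma antimono_Darboux_left_continuous:
  fixes f :: "real \<Rightarrow> real"
  assumes dec: "\<And>x y. \<alpha> \<le> x \<Longrightarrow> x \<le> y \<Longrightarrow> y \<le> \<beta> \<Longrightarrow> f y \<le> f x"
    and darboux: "\<And>x y v. \<alpha> \<le> x \<Longrightarrow> x \<le> y \<Longrightarrow> y \<le> \<beta> \<Longrightarrow> f y \<le> v \<Longrightarrow> v \<le> f x
        \<Longrightarrow> \<exists>w. x \<le> w \<and> w \<le> y \<and> f w = v"
    and x: "\<alpha> \<le> x" "x \<le> \<beta>" and e: "0 < e"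
  shows "\<exists>d>0. \<forall>x'. \<alpha> \<le> x' \<longrightarrow> x' \<le> x \<longrightarrow> x - x' < d \<longrightarrow> f x' < f x + e"
proof (cases "f \<alpha> < f x + e")
  case True
  then show ?thesis using dec[of \<alpha>] x by (intro exI[of _ 1]) force
next
  case False
  then obtain w where w: "\<alpha> \<le> w" "w \<le> x" "f w = f x + e / 2"
    using darboux[OF order_refl x, of "f x + e / 2"] e by auto
  then have "w < x" using e by (cases "w = x") auto
  have "f x' < f x + e" if "x' \<le> x" "x - x' < x - w" for x'
    using dec[of w x'] w x e that by simp
  then show ?thesis using \<open>w < x\<close> by (intro exI[of _ "x - w"]) auto
qed

lemma antimono_Darboux_right_continuous:
  fixes f :: "real \<Rightarrow> real"
  assumes dec: "\<And>x y. \<alpha> \<le> x \<Longrightarrow> x \<le> y \<Longrightarrow> y \<le> \<beta> \<Longrightarrow> f y \<le> f x"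
    and darboux: "\<And>x y v. \<alpha> \<le> x \<Longrightarrow> x \<le> y \<Longrightarrow> y \<le> \<beta> \<Longrightarrow> f y \<le> v \<Longrightarrow> v \<le> f x
        \<Longrightarrow> \<exists>w. x \<le> w \<and> w \<le> y \<and> f w = v"
    and x: "\<alpha> \<le> x" "x \<le> \<beta>" and e: "0 < e"
  shows "\<exists>d>0. \<forall>x'. x \<le> x' \<longrightarrow> x' \<le> \<beta> \<longrightarrow> x' - x < d \<longrightarrow> f x - e < f x'"
proof -
  \<comment> \<open>Reflect: \<open>y \<mapsto> - f (- y)\<close> is again antimonotone with the Darboux property on \<open>[-\<beta>, -\<alpha>]\<close>.\<close>
  have "\<exists>d>0. \<forall>y. - \<beta> \<le> y \<longrightarrow> y \<le> - x \<longrightarrow> - x - y < d \<longrightarrow> - f (- y) < - f (- (- x)) + e"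
  proof (rule antimono_Darboux_left_continuous[where \<alpha> = "- \<beta>" and \<beta> = "- \<alpha>"])
    fix y z v assume "- \<beta> \<le> y" "y \<le> z" "z \<le> - \<alpha>" "- f (- z) \<le> v" "v \<le> - f (- y)"
    then obtain w where "- z \<le> w" "w \<le> - y" "f w = - v" using darboux[of "- z" "- y" "- v"] by auto
    then show "\<exists>w. y \<le> w \<and> w \<le> z \<and> - f (- w) = v" by (intro exI[of _ "- w"]) auto
  qed (use dec x e in auto)
  then obtain d where "d > 0"
    and d: "\<forall>y. - \<beta> \<le> y \<longrightarrow> y \<le> - x \<longrightarrow> - x - y < d \<longrightarrow> - f (- y) < - f (- (- x)) + e"
    by blast
  have "f x - e < f x'" if "x \<le> x'" "x' \<le> \<beta>" "x' - x < d" for x'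
    using d[rule_format, of "- x'"] that by simp
  then show ?thesis using \<open>d > 0\<close> by blast
qed

lemma continuous_on_antimono_Darboux:
  fixes f :: "real \<Rightarrow> real"
  assumes dec: "\<And>x y. \<alpha> \<le> x \<Longrightarrow> x \<le> y \<Longrightarrow> y \<le> \<beta> \<Longrightarrow> f y \<le> f x"
    and darboux: "\<And>x y v. \<alpha> \<le> x \<Longrightarrow> x \<le> y \<Longrightarrow> y \<le> \<beta> \<Longrightarrow> f y \<le> v \<Longrightarrow> v \<le> f x
        \<Longrightarrow> \<exists>w. x \<le> w \<and> w \<le> y \<and> f w = v"
  shows "continuous_on {\<alpha>..\<beta>} f"
  unfolding continuous_on_iff
proof (intro ballI allI impI)
  fix x e :: real assume "x \<in> {\<alpha>..\<beta>}" and e: "0 < e"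
  then have x: "\<alpha> \<le> x" "x \<le> \<beta>" by auto
  obtain d1 where d1: "d1 > 0" "\<And>x'. \<alpha> \<le> x' \<Longrightarrow> x' \<le> x \<Longrightarrow> x - x' < d1 \<Longrightarrow> f x' < f x + e"
    using antimono_Darboux_left_continuous[OF dec darboux x e] by blast
  obtain d2 where d2: "d2 > 0" "\<And>x'. x \<le> x' \<Longrightarrow> x' \<le> \<beta> \<Longrightarrow> x' - x < d2 \<Longrightarrow> f x - e < f x'"
    using antimono_Darboux_right_continuous[OF dec darboux x e] by blast
  have "dist (f x') (f x) < e" if "x' \<in> {\<alpha>..\<beta>}" "dist x' x < min d1 d2" for x'
  proof (cases "x' \<le> x")
    case True
    then show ?thesis using dec[of x' x] d1(2)[of x'] that x by (auto simp: dist_real_def)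
  next
    case False
    then show ?thesis using dec[of x x'] d2(2)[of x'] that x by (auto simp: dist_real_def)
  qed
  then show "\<exists>d>0. \<forall>x'\<in>{\<alpha>..\<beta>}. dist x' x < d \<longrightarrow> dist (f x') (f x) < e"
    using d1(1) d2(1) by (intro exI[of _ "min d1 d2"]) auto
qed

section \<open>Bundles\<close>

lemma pdom_iff: "(s, q) \<in> pdom t \<longleftrightarrow> 0 \<le> s \<and> s \<le> t \<and> 0 \<le> q \<and> q \<le> 1"
  by (simp add: pdom_def)

lemma pdom_mono: "x \<in> pdom s \<Longrightarrow> s \<le> t \<Longrightarrow> x \<in> pdom t"
  by (cases x) (auto simp: pdom_iff)

lemma pdom_subset_consumption_set: "pdom t \<subseteq> consumption_set"
  unfolding pdom_def consumption_set_def by auto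

lemma pdom_bless: "bless x y \<Longrightarrow> x \<in> pdom s \<Longrightarrow> y \<in> pdom t \<Longrightarrow> x \<in> pdom t"
  by (cases x, cases y) (auto simp: pdom_iff bless_def)

lemma ble_fst_le: "ble y z \<Longrightarrow> fst y \<le> fst z"
  by (auto simp: ble_def bless_def)

lemma ble_antisym: "ble x y \<Longrightarrow> ble y x \<Longrightarrow> x = y"
  by (auto simp: ble_def bless_def)

lemma ble_fst_eq_imp_eq: "ble y z \<Longrightarrow> fst y = fst z \<Longrightarrow> y = z"
  by (auto simp: ble_def bless_def)

lemma ble_chain_eventually_const:
  fixes x :: "nat \<Rightarrow> bndl"
  assumes fin: "finite (range x)"
    and chain: "(\<forall>m n. m \<le> n \<longrightarrow> ble (x m) (x n)) \<or> (\<forall>m n. m \<le> n \<longrightarrow> ble (x n) (x m))"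
  shows "\<exists>N. \<forall>n\<ge>N. x n = x N"
proof -
  have "finite (range (\<lambda>n. fst (x n)))" "finite (range (\<lambda>n. - fst (x n)))"
    using finite_imageI[OF fin, of fst] finite_imageI[OF fin, of "\<lambda>y. - fst y"]
    by (simp_all add: image_image)
  moreover have "incseq (\<lambda>n. fst (x n)) \<or> incseq (\<lambda>n. - fst (x n))"
  proof (rule disjE[OF chain])
    assume "\<forall>m n. m \<le> n \<longrightarrow> ble (x m) (x n)"
    then show ?thesis by (intro disjI1 monoI) (simp add: ble_fst_le)
  next
    assume "\<forall>m n. m \<le> n \<longrightarrow> ble (x n) (x m)"
    then show ?thesis by (intro disjI2 monoI) (simp add: ble_fst_le)
  qed
  ultimately obtain N where N: "\<And>n. N \<le> n \<Longrightarrow> fst (x n) = fst (x N)"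
    using incseq_finite_range_eventually_const[of "\<lambda>n. fst (x n)"]
      incseq_finite_range_eventually_const[of "\<lambda>n. - fst (x n)"] by auto
  have "x n = x N" if "N \<le> n" for n
    using chain ble_fst_eq_imp_eq[of "x N" "x n"] ble_fst_eq_imp_eq[of "x n" "x N"] N[OF that] that
    by auto
  then show ?thesis by blast
qed

section \<open>Restricted classical preferences\<close>

lemma restricted_classicalD:
  assumes "restricted_classical (t, R)"
  shows rc_pos: "0 < t"
    and rc_field: "\<And>x y. R x y \<Longrightarrow> x \<in> pdom t \<and> y \<in> pdom t"
    and rc_total: "\<And>x y. x \<in> pdom t \<Longrightarrow> y \<in> pdom t \<Longrightarrow> R x y \<or> R y x"
    and rc_trans: "\<And>x y z. R x y \<Longrightarrow> R y z \<Longrightarrow> R x z"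
    and rc_strict_payment: "\<And>q t' t''. 0 < q \<Longrightarrow> q \<le> 1 \<Longrightarrow> 0 \<le> t' \<Longrightarrow> t' < t'' \<Longrightarrow> t'' \<le> t
        \<Longrightarrow> strict R (t', q) (t'', q)"
    and rc_strict_quantity: "\<And>s q' q''. 0 \<le> s \<Longrightarrow> s < t \<Longrightarrow> 0 \<le> q' \<Longrightarrow> q' < q'' \<Longrightarrow> q'' \<le> 1
        \<Longrightarrow> strict R (s, q'') (s, q')"
    and rc_indiff_cap: "\<And>q. 0 \<le> q \<Longrightarrow> q \<le> 1 \<Longrightarrow> indiff R (0, 0) (t, q)"
    and rc_indiff_null: "\<And>s. 0 \<le> s \<Longrightarrow> s < t \<Longrightarrow> indiff R (0, 0) (s, 0)"
    and rc_closed_upper: "\<And>z. z \<in> pdom t \<Longrightarrow> closed {x. R x z}"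
    and rc_closed_lower: "\<And>z. z \<in> pdom t \<Longrightarrow> closed {x. R z x}"
  using assms unfolding restricted_classical_def by auto

lemma indiff_sym: "indiff R x y \<Longrightarrow> indiff R y x"
  by (simp add: indiff_def)

lemma rc_refl: "restricted_classical (t, R) \<Longrightarrow> x \<in> pdom t \<Longrightarrow> R x x"
  using rc_total by blast

lemma rc_indiff_trans:
  "restricted_classical (t, R) \<Longrightarrow> indiff R x y \<Longrightarrow> indiff R y z \<Longrightarrow> indiff R x z"
  unfolding indiff_def using rc_trans by blast

lemma rc_strict_trans1: "restricted_classical (t, R) \<Longrightarrow> R x y \<Longrightarrow> strict R y z \<Longrightarrow> strict R x z"
  unfolding strict_def using rc_trans by blast

lemma rc_strict_trans2: "restricted_classical (t, R) \<Longrightarrow> strict R x y \<Longrightarrow> R y z \<Longrightarrow> strict R x z"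
  unfolding strict_def using rc_trans by blast

lemma rc_weak_payment:
  assumes rc: "restricted_classical (t, R)" and "0 < q" "q \<le> 1" "0 \<le> t'" "t' \<le> t''" "t'' \<le> t"
  shows "R (t', q) (t'', q)"
proof (cases "t' = t''")
  case True
  then show ?thesis using rc_refl[OF rc] assms by (simp add: pdom_iff)
next
  case False
  then show ?thesis using rc_strict_payment[OF rc, of q t' t''] assms by (simp add: strict_def)
qed

lemma rc_weak_quantity:
  assumes rc: "restricted_classical (t, R)" and "0 \<le> s" "s < t" "0 \<le> q'" "q' \<le> q''" "q'' \<le> 1"
  shows "R (s, q'') (s, q')"
proof (cases "q' = q''")
  case True
  then show ?thesis using rc_refl[OF rc] assms by (simp add: pdom_iff)
next
  case False
  then show ?thesis using rc_strict_quantity[OF rc, of s q' q''] assms by (simp add: strict_def)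
qed

lemma rc_strict_null:
  assumes rc: "restricted_classical (t, R)" and "0 \<le> s" "s < t" "0 < q" "q \<le> 1"
  shows "strict R (s, q) (0, 0)"
  using rc_strict_trans2[OF rc rc_strict_quantity[OF rc, of s 0 q]] rc_indiff_null[OF rc, of s]
    assms
  by (simp add: indiff_def)

text \<open>Null-quantity bundles are assumed to be the null bundle itself, since all of them are
  indifferent to it.\<close>
lemma rc_strict_dominance:
  assumes rc: "restricted_classical (t, R)"
    and "0 \<le> s1" "s1 \<le> s2" "s2 < t" "0 \<le> q2" "q2 \<le> q1" "q1 \<le> 1"
    and "q1 = 0 \<Longrightarrow> s1 = 0" "q2 = 0 \<Longrightarrow> s2 = 0" and "(s1, q1) \<noteq> (s2, q2)"
  shows "strict R (s1, q1) (s2, q2)"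
proof (cases "q1 = q2")
  case True
  then show ?thesis using rc_strict_payment[OF rc, of q1 s1 s2] assms by (cases "q1 = 0") auto
next
  case False
  then show ?thesis
    using rc_strict_trans1[OF rc rc_weak_payment[OF rc, of q1 s1 s2]
        rc_strict_quantity[OF rc, of s2 q2 q1]] assms
    by simp
qed

lemma rc_outcome_nondegenerate:
  assumes rc: "restricted_classical (t, R)" and x: "(s, q) \<in> pdom t"
    and null: "indiff R (s, q) (0, 0) \<longrightarrow> (s, q) = (0, 0)"
  shows "s < t" and "q = 0 \<Longrightarrow> s = 0"
proof -
  have cap: "indiff R (t, q) (0, 0)"
    using rc_indiff_cap[OF rc, of q] x by (simp add: pdom_iff indiff_sym)
  show "s < t"
  proof (rule ccontr)
    assume "\<not> s < t"
    then have "s = t" using x by (simp add: pdom_iff)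
    then show False using null cap rc_pos[OF rc] by simp
  qed
  assume "q = 0"
  then have "indiff R (s, q) (0, 0)"
    using rc_indiff_null[OF rc, of s] cap x \<open>s < t\<close> by (simp add: pdom_iff indiff_sym)
  then show "s = 0" using null by simp
qed

lemma rc_indiff_on_path:
  fixes \<gamma> :: "real \<Rightarrow> bndl"
  assumes rc: "restricted_classical (t, R)"
    and cont: "continuous_on {\<alpha>..\<beta>} \<gamma>" and "\<alpha> \<le> \<beta>"
    and path: "\<gamma> ` {\<alpha>..\<beta>} \<subseteq> pdom t" and w: "w \<in> pdom t"
    and start: "R (\<gamma> \<alpha>) w" and finish: "R w (\<gamma> \<beta>)"
  shows "\<exists>s\<in>{\<alpha>..\<beta>}. indiff R (\<gamma> s) w"
proof (rule ccontr)
  assume none: "\<not> ?thesis"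
  define A where "A = {\<alpha>..\<beta>} \<inter> \<gamma> -` {x. R x w}"
  define B where "B = {\<alpha>..\<beta>} \<inter> \<gamma> -` {x. R w x}"
  have "closed A" "closed B"
    unfolding A_def B_def
    by (intro continuous_closed_preimage[OF cont closed_atLeastAtMost] rc_closed_upper[OF rc w]
        rc_closed_lower[OF rc w])+
  moreover have "{\<alpha>..\<beta>} \<subseteq> A \<union> B"
  proof
    fix s assume s: "s \<in> {\<alpha>..\<beta>}"
    then have "\<gamma> s \<in> pdom t" using path by blast
    then show "s \<in> A \<union> B" using rc_total[OF rc _ w] s unfolding A_def B_def by auto
  qed
  moreover have "A \<inter> B = {}"
    using none unfolding A_def B_def indiff_def by auto
  moreover have "\<alpha> \<in> A" "\<beta> \<in> B"
    using start finish \<open>\<alpha> \<le> \<beta>\<close> unfolding A_def B_def by auto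
  ultimately have "A \<inter> {\<alpha>..\<beta>} = {} \<or> B \<inter> {\<alpha>..\<beta>} = {}"
    by (intro connected_closedD[of "{\<alpha>..\<beta>}" A B]) auto
  then show False using \<open>\<alpha> \<in> A\<close> \<open>\<beta> \<in> B\<close> unfolding A_def B_def by blast
qed

lemma rc_indiff_same_payment:
  assumes rc: "restricted_classical (t, R)" and "0 \<le> a" "a < t"
    and "0 \<le> v" "v \<le> 1" "0 \<le> v'" "v' \<le> 1"
    and "indiff R (a, v) x" "indiff R (a, v') x"
  shows "v = v'"
proof (rule ccontr)
  assume "v \<noteq> v'"
  moreover have "indiff R (a, v) (a, v')" using rc_indiff_trans[OF rc] indiff_sym assms by blast
  ultimately show False
    using rc_strict_quantity[OF rc, of a v v'] rc_strict_quantity[OF rc, of a v' v] assms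
    unfolding strict_def indiff_def by (cases "v < v'") auto
qed

definition indiff_quantity :: "(bndl \<Rightarrow> bndl \<Rightarrow> bool) \<Rightarrow> real \<Rightarrow> real \<Rightarrow> real \<Rightarrow> real" where
  "indiff_quantity R a r s = (THE v. 0 \<le> v \<and> v \<le> 1 \<and> indiff R (a, v) (s, r))"

lemma indiff_quantity_exists:
  assumes rc: "restricted_classical (t, R)" and "0 \<le> a" "a < s" "s \<le> t" "0 < r" "r \<le> 1"
  shows "\<exists>v. 0 \<le> v \<and> v \<le> 1 \<and> indiff R (a, v) (s, r)"
proof -
  have top: "R (a, 1 - 0) (s, r)"
    using rc_trans[OF rc rc_weak_quantity[OF rc, of a r 1] rc_weak_payment[OF rc, of r a s]] assms
    by simp
  have "R (s, r) (0, 0)"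
  proof (cases "s < t")
    case True
    then show ?thesis using rc_strict_null[OF rc, of s r] assms by (simp add: strict_def)
  next
    case False
    then show ?thesis using rc_indiff_cap[OF rc, of r] assms by (simp add: indiff_def)
  qed
  then have bottom: "R (s, r) (a, 1 - 1)"
    using rc_trans[OF rc] rc_indiff_null[OF rc, of a] assms by (auto simp: indiff_def)
  have "continuous_on {0..1} (\<lambda>q::real. (a, 1 - q))"
    by (intro continuous_on_Pair continuous_on_const continuous_on_diff continuous_on_id)
  moreover have "(\<lambda>q. (a, 1 - q)) ` {0..1} \<subseteq> pdom t" using assms by (auto simp: pdom_iff)
  moreover have "(s, r) \<in> pdom t" using assms by (simp add: pdom_iff)
  ultimately have "\<exists>q\<in>{0..1}. indiff R (a, 1 - q) (s, r)"
    using rc_indiff_on_path[OF rc, of 0 1 "\<lambda>q. (a, 1 - q)" "(s, r)"] top bottom by simp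
  then obtain q where "0 \<le> q" "q \<le> 1" "indiff R (a, 1 - q) (s, r)" by auto
  then show ?thesis by (intro exI[of _ "1 - q"]) simp
qed

lemma indiff_quantity:
  assumes rc: "restricted_classical (t, R)" and "0 \<le> a" "a < s" "s \<le> t" "0 < r" "r \<le> 1"
  shows "0 \<le> indiff_quantity R a r s" "indiff_quantity R a r s \<le> 1"
    and "indiff R (a, indiff_quantity R a r s) (s, r)"
proof -
  obtain v where v: "0 \<le> v \<and> v \<le> 1 \<and> indiff R (a, v) (s, r)"
    using indiff_quantity_exists[OF assms] by blast
  have "indiff_quantity R a r s = v"
    unfolding indiff_quantity_def
    using v rc_indiff_same_payment[OF rc, of a _ v "(s, r)"] assms by (intro the_equality) auto
  then show "0 \<le> indiff_quantity R a r s" "indiff_quantity R a r s \<le> 1"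
    and "indiff R (a, indiff_quantity R a r s) (s, r)"
    using v by simp_all
qed

lemma indiff_quantity_eqI:
  assumes rc: "restricted_classical (t, R)" and "0 \<le> a" "a < s" "s \<le> t" "0 < r" "r \<le> 1"
    and "0 \<le> v" "v \<le> 1" "indiff R (a, v) (s, r)"
  shows "indiff_quantity R a r s = v"
  using indiff_quantity[OF assms(1-6)] rc_indiff_same_payment[OF rc, of a v _ "(s, r)"] assms
  by auto

lemma indiff_quantity_antimono:
  assumes rc: "restricted_classical (t, R)"
    and "0 \<le> a" "a < s" "s \<le> s'" "s' \<le> t" "0 < r" "r \<le> 1"
  shows "indiff_quantity R a r s' \<le> indiff_quantity R a r s"
proof (rule ccontr)
  assume "\<not> ?thesis"
  then have "strict R (a, indiff_quantity R a r s') (a, indiff_quantity R a r s)"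
    using rc_strict_quantity[OF rc] indiff_quantity[OF rc, of a s r]
      indiff_quantity[OF rc, of a s' r]
      assms by simp
  moreover have "R (s, r) (s', r)" using rc_weak_payment[OF rc, of r s s'] assms by simp
  moreover have "indiff R (a, indiff_quantity R a r s) (s, r)"
    and "indiff R (a, indiff_quantity R a r s') (s', r)"
    using indiff_quantity(3)[OF rc] assms by auto
  ultimately show False using rc_trans[OF rc] unfolding strict_def indiff_def by blast
qed

lemma indiff_quantity_Darboux:
  assumes rc: "restricted_classical (t, R)"
    and "0 \<le> a" "a < s" "s \<le> s'" "s' \<le> t" "0 < r" "r \<le> 1"
    and v: "indiff_quantity R a r s' \<le> v" "v \<le> indiff_quantity R a r s"
  shows "\<exists>w. s \<le> w \<and> w \<le> s' \<and> indiff_quantity R a r w = v"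
proof -
  note q = indiff_quantity[OF rc, of a s r] indiff_quantity[OF rc, of a s' r]
  have "R (s, r) (a, v)"
    using rc_trans[OF rc _ rc_weak_quantity[OF rc, of a v "indiff_quantity R a r s"]] q v assms
    by (auto simp: indiff_def)
  moreover have "R (a, v) (s', r)"
    using rc_trans[OF rc rc_weak_quantity[OF rc, of a "indiff_quantity R a r s'" v]] q v assms
    by (auto simp: indiff_def)
  moreover have "continuous_on {s..s'} (\<lambda>u. (u, r))" by (intro continuous_intros)
  moreover have "(\<lambda>u. (u, r)) ` {s..s'} \<subseteq> pdom t" "(a, v) \<in> pdom t"
    using q v assms by (auto simp: pdom_iff)
  ultimately obtain w where "w \<in> {s..s'}" "indiff R (w, r) (a, v)"
    using rc_indiff_on_path[OF rc, of s s' "\<lambda>u. (u, r)" "(a, v)"] assms by auto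
  then show ?thesis
    using indiff_quantity_eqI[OF rc, of a w r v] q v assms indiff_sym by (intro exI[of _ w]) auto
qed

lemma indiff_quantity_le:
  assumes rc: "restricted_classical (t, R)" and "0 \<le> a" "a < s" "s \<le> t" "0 < r" "r \<le> 1"
    and "0 \<le> p" and pref: "R (a, p) (s, r)"
  shows "indiff_quantity R a r s \<le> p"
proof (rule ccontr)
  assume "\<not> ?thesis"
  then have "strict R (a, indiff_quantity R a r s) (a, p)"
    using rc_strict_quantity[OF rc, of a p] indiff_quantity[OF rc, of a s r] assms by simp
  then show False
    using rc_trans[OF rc pref] indiff_quantity(3)[OF rc, of a s r] assms unfolding strict_def
      indiff_def by blast
qed

lemma indiff_quantity_cap:
  assumes rc: "restricted_classical (t, R)" and "0 \<le> a" "a < t" "0 < r" "r \<le> 1"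
  shows "indiff_quantity R a r t = 0"
proof -
  have "indiff R (a, 0) (t, r)"
    using rc_indiff_trans[OF rc indiff_sym[OF rc_indiff_null[OF rc, of a]] rc_indiff_cap[OF rc, of r]]
      assms by simp
  then show ?thesis using indiff_quantity_eqI[OF rc, of a t r 0] assms by simp
qed

lemma indiff_quantity_pos:
  assumes rc: "restricted_classical (t, R)" and "0 \<le> a" "a < s" "s < t" "0 < r" "r \<le> 1"
  shows "0 < indiff_quantity R a r s"
proof (rule ccontr)
  assume "\<not> ?thesis"
  then have "indiff R (a, 0) (s, r)" using indiff_quantity[OF rc, of a s r] assms by simp
  then have "indiff R (0, 0) (s, r)"
    using rc_indiff_trans[OF rc rc_indiff_null[OF rc, of a]] assms by simp
  then show False using rc_strict_null[OF rc, of s r] assms unfolding strict_def indiff_def by simp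
qed

lemma continuous_on_indiff_quantity:
  assumes rc: "restricted_classical (t, R)" and "0 \<le> a" "a < c" "c \<le> t'" "t' \<le> t" "0 < r" "r \<le> 1"
  shows "continuous_on {c..t'} (indiff_quantity R a r)"
  using assms by (intro continuous_on_antimono_Darboux indiff_quantity_antimono[OF rc]
      indiff_quantity_Darboux[OF rc]) auto

section \<open>Single crossing\<close>

lemma single_crossing_interior:
  assumes rc1: "restricted_classical (t1, R1)" and rc2: "restricted_classical (t2, R2)"
    and sc: "single_crossing (t1, R1) (t2, R2)" and "t1 < t2"
    and bounds: "0 \<le> a" "a < c" "c < t1" "0 \<le> p" "p < r" "r \<le> 1"
    and ind: "indiff R1 (a, p) (c, r)"
  shows "\<not> R2 (a, p) (c, r)"
proof
  assume pref: "R2 (a, p) (c, r)"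
  define h1 where "h1 = indiff_quantity R1 a r"
  define h2 where "h2 = indiff_quantity R2 a r"
  have "continuous_on {c..t1} (\<lambda>s. h2 s - h1 s)"
    unfolding h1_def h2_def using bounds \<open>t1 < t2\<close>
    by (intro continuous_on_diff continuous_on_indiff_quantity[OF rc2]
        continuous_on_indiff_quantity[OF rc1]) auto
  moreover have "h2 c - h1 c \<le> 0"
    using indiff_quantity_le[OF rc2, of a c r p] indiff_quantity_eqI[OF rc1, of a c r p] pref ind
      bounds
      \<open>t1 < t2\<close> unfolding h1_def h2_def by simp
  moreover have "0 < h2 t1 - h1 t1"
    using indiff_quantity_pos[OF rc2, of a t1 r] indiff_quantity_cap[OF rc1, of a r] bounds
      \<open>t1 < t2\<close>
    unfolding h1_def h2_def by simp
  ultimately obtain s where s: "c \<le> s" "s \<le> t1" "h2 s - h1 s = 0"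
    using IVT'[of "\<lambda>s. h2 s - h1 s" c 0 t1] bounds by auto
  then have "s < t1" using \<open>0 < h2 t1 - h1 t1\<close> by (cases "s = t1") auto
  \<comment> \<open>Both indifference curves through \<open>(s, r)\<close> pass through \<open>(a, h1 s)\<close>: a second crossing.\<close>
  have "(a, h1 s) \<in> indiff_set (t1, R1) (s, r) \<inter> indiff_set (t2, R2) (s, r)"
    using indiff_quantity(3)[OF rc1, of a s r] indiff_quantity(3)[OF rc2, of a s r] s bounds
      \<open>t1 < t2\<close>
    unfolding h1_def h2_def by (simp add: indiff_set_def)
  moreover have "indiff_set (t1, R1) (s, r) \<inter> indiff_set (t2, R2) (s, r) = {(s, r)}"
    using sc s \<open>s < t1\<close> \<open>t1 < t2\<close> bounds unfolding single_crossing_def by auto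
  ultimately show False using s bounds by auto
qed

lemma single_crossing_strict_above:
  assumes rc1: "restricted_classical (t1, R1)" and rc2: "restricted_classical (t2, R2)"
    and sc: "single_crossing (t1, R1) (t2, R2)" and "t1 < t2"
    and less: "bless (a, p) (c, r)" and ind: "indiff R1 (a, p) (c, r)"
  shows "strict R2 (c, r) (a, p)"
proof -
  have bounds: "0 \<le> a" "a < c" "c \<le> t1" "0 \<le> p" "p < r" "r \<le> 1"
    using less rc_field[OF rc1] ind by (auto simp: indiff_def bless_def pdom_iff)
  have in2: "(a, p) \<in> pdom t2" "(c, r) \<in> pdom t2" using bounds \<open>t1 < t2\<close> by (auto simp: pdom_iff)
  show ?thesis
  proof (cases "c = t1")
    case True
    \<comment> \<open>At the cap \<open>(c, r)\<close> is as bad as the null bundle, which forces \<open>p = 0\<close>.\<close>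
    have "indiff R1 (c, r) (0, 0)"
      using rc_indiff_cap[OF rc1, of r] True bounds by (simp add: indiff_sym)
    then have "indiff R1 (a, p) (0, 0)" using rc_indiff_trans[OF rc1 ind] by blast
    then have "p = 0"
      using rc_strict_null[OF rc1, of a p] bounds True unfolding strict_def indiff_def
      by (cases "p = 0") auto
    then show ?thesis
      using rc_strict_trans2[OF rc2 rc_strict_null[OF rc2, of c r]] rc_indiff_null[OF rc2, of a]
        bounds
        \<open>t1 < t2\<close> by (simp add: indiff_def)
  next
    case False
    then show ?thesis
      using single_crossing_interior[OF rc1 rc2 sc \<open>t1 < t2\<close>, of a c p r] rc_total[OF rc2 in2] ind
        bounds
      unfolding strict_def by auto
  qed
qed

lemma single_crossing_strict_below:
  assumes rc1: "restricted_classical (t1, R1)" and rc2: "restricted_classical (t2, R2)"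
    and sc: "single_crossing (t1, R1) (t2, R2)" and "t1 < t2"
    and less: "bless (a, p) (c, r)" and ind: "indiff R2 (a, p) (c, r)" and "(c, r) \<in> pdom t1"
  shows "strict R1 (a, p) (c, r)"
proof (rule ccontr)
  assume not_strict: "\<not> ?thesis"
  have bounds: "0 \<le> a" "a < c" "c \<le> t1" "0 \<le> p" "p < r" "r \<le> 1"
    using less rc_field[OF rc2] ind \<open>(c, r) \<in> pdom t1\<close> by (auto simp: indiff_def bless_def pdom_iff)
  then have "R1 (c, r) (a, 1 - (1 - p))"
    using rc_total[OF rc1, of "(c, r)" "(a, p)"] not_strict \<open>(c, r) \<in> pdom t1\<close>
    by (auto simp: strict_def pdom_iff)
  moreover have cheaper: "strict R1 (a, r) (c, r)"
    using rc_strict_payment[OF rc1, of r a c] bounds by simp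
  moreover have "continuous_on {1 - r..1 - p} (\<lambda>q::real. (a, 1 - q))"
    by (intro continuous_on_Pair continuous_on_const continuous_on_diff continuous_on_id)
  moreover have "(\<lambda>q. (a, 1 - q)) ` {1 - r..1 - p} \<subseteq> pdom t1" using bounds by (auto simp: pdom_iff)
  ultimately have "\<exists>q\<in>{1 - r..1 - p}. indiff R1 (a, 1 - q) (c, r)"
    using rc_indiff_on_path[OF rc1, of "1 - r" "1 - p" "\<lambda>q. (a, 1 - q)" "(c, r)"]
      \<open>(c, r) \<in> pdom t1\<close> bounds by (simp add: strict_def)
  \<comment> \<open>Type 1 is indifferent between \<open>(c, r)\<close> and some \<open>(a, q)\<close> with \<open>p \<le> q < r\<close>;
    type 2 then strictly prefers \<open>(c, r)\<close> to \<open>(a, q)\<close>, hence to \<open>(a, p)\<close>.\<close>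
  then obtain q' where "1 - r \<le> q'" "q' \<le> 1 - p" "indiff R1 (a, 1 - q') (c, r)" by auto
  then obtain q where q: "p \<le> q" "q \<le> r" "indiff R1 (a, q) (c, r)" by (intro that[of "1 - q'"]) auto
  with cheaper have "q < r" unfolding strict_def indiff_def by (cases "q = r") auto
  then have "strict R2 (c, r) (a, q)"
    using single_crossing_strict_above[OF rc1 rc2 sc \<open>t1 < t2\<close>, of a q c r] q bounds
    by (simp add: bless_def)
  moreover have "R2 (a, q) (a, p)"
    using rc_weak_quantity[OF rc2, of a p q] q bounds \<open>t1 < t2\<close> by simp
  ultimately show False using ind rc_trans[OF rc2] unfolding strict_def indiff_def by blast
qed

locale rich_domain =
  fixes D :: "pref set"
  assumes rich: "rich_single_crossing_domain D"
begin

lemma rich_rc: "P \<in> D \<Longrightarrow> restricted_classical (fst P, snd P)"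
  using rich unfolding rich_single_crossing_domain_def by simp

lemma rich_single_crossing:
  "P \<in> D \<Longrightarrow> Q \<in> D \<Longrightarrow> P \<noteq> Q \<Longrightarrow> single_crossing (fst P, snd P) (fst Q, snd Q)"
  using rich unfolding rich_single_crossing_domain_def by simp

lemma rich_type_inj: "P \<in> D \<Longrightarrow> Q \<in> D \<Longrightarrow> fst P = fst Q \<Longrightarrow> P = Q"
  using rich_single_crossing unfolding single_crossing_def by fastforce

lemma rich_indiff_type:
  "x \<in> pdom t \<Longrightarrow> y \<in> pdom t' \<Longrightarrow> bless x y \<Longrightarrow> \<exists>\<tau>\<in>D. indiff (snd \<tau>) x y"
  using rich pdom_subset_consumption_set unfolding rich_single_crossing_domain_def by blast

lemma rich_type_exists:
  assumes "0 < t"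
  shows "\<exists>P\<in>D. fst P = t"
proof -
  obtain P where P: "P \<in> D" "indiff (snd P) (0, 0) (t, 1)"
    using rich_indiff_type[of "(0, 0)" t "(t, 1)" t] assms by (auto simp: pdom_iff bless_def)
  note rc = rich_rc[OF P(1)]
  have "t \<le> fst P" using rc_field[OF rc] P(2) by (auto simp: indiff_def pdom_iff)
  moreover have "\<not> t < fst P"
    using rc_strict_null[OF rc, of t 1] P(2) assms unfolding strict_def indiff_def by auto
  ultimately show ?thesis using P(1) by (intro bexI[of _ P]) auto
qed

lemma rich_pref_mono_strict:
  assumes Q: "Q \<in> D" and P: "P \<in> D" and "fst Q < fst P"
    and less: "bless a b" and pref: "snd Q b a"
  shows "strict (snd P) b a"
proof -
  have "a \<in> pdom (fst Q)" "b \<in> pdom (fst Q)" using rc_field[OF rich_rc[OF Q] pref] by auto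
  then obtain \<tau> where \<tau>: "\<tau> \<in> D" "indiff (snd \<tau>) a b" using rich_indiff_type less by blast
  show ?thesis
  proof (cases "fst \<tau> < fst P")
    case True
    then show ?thesis
      using single_crossing_strict_above[OF rich_rc[OF \<tau>(1)] rich_rc[OF P]
          rich_single_crossing[OF \<tau>(1) P], of "fst a" "snd a" "fst b" "snd b"] \<tau>(2) less
      by auto
  next
    case False
    then have "strict (snd Q) a b"
      using single_crossing_strict_below[OF rich_rc[OF Q] rich_rc[OF \<tau>(1)]
          rich_single_crossing[OF Q \<tau>(1)], of "fst a" "snd a" "fst b" "snd b"]
        \<tau>(2) less \<open>fst Q < fst P\<close> \<open>b \<in> pdom (fst Q)\<close> by auto
    then show ?thesis using pref unfolding strict_def by simp
  qed
qed

lemma rich_pref_mono: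
  assumes "Q \<in> D" "P \<in> D" "fst Q \<le> fst P" "bless a b" "snd Q b a"
  shows "snd P b a"
  using rich_pref_mono_strict[OF assms(1,2) _ assms(4,5)] rich_type_inj[OF assms(1,2)] assms(3,5)
  unfolding strict_def by force

lemma rich_pref_antimono_strict:
  assumes Q: "Q \<in> D" and P: "P \<in> D" and "fst Q < fst P"
    and less: "bless a b" and "b \<in> pdom (fst Q)" and pref: "snd P a b"
  shows "strict (snd Q) a b"
proof -
  have "a \<in> pdom (fst Q)"
    using \<open>b \<in> pdom (fst Q)\<close> rc_field[OF rich_rc[OF P] pref] less
    by (cases a, cases b) (auto simp: pdom_iff bless_def)
  then show ?thesis
    using rc_total[OF rich_rc[OF Q] _ \<open>b \<in> pdom (fst Q)\<close>]
      rich_pref_mono_strict[OF Q P \<open>fst Q < fst P\<close> less]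
      pref unfolding strict_def by blast
qed

lemma rich_pref_antimono:
  assumes "Q \<in> D" "P \<in> D" "fst Q \<le> fst P" "bless a b" "b \<in> pdom (fst Q)" "snd P a b"
  shows "snd Q a b"
  using rich_pref_antimono_strict[OF assms(1,2) _ assms(4,5,6)] rich_type_inj[OF assms(1,2)]
    assms(3,6)
  unfolding strict_def by force

lemma sp_pair_outcomes_ordered:
  assumes P1: "P1 \<in> D" and P2: "P2 \<in> D" and "fst P1 < fst P2"
    and x: "x \<in> pdom (fst P1)" and y: "y \<in> pdom (fst P2)"
    and null1: "indiff (snd P1) x (0, 0) \<longrightarrow> x = (0, 0)"
    and null2: "indiff (snd P2) y (0, 0) \<longrightarrow> y = (0, 0)"
    and pref2: "snd P2 y x" and pref1: "y \<in> pdom (fst P1) \<Longrightarrow> snd P1 x y"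
  shows "ble x y"
proof -
  obtain s1 q1 s2 q2 where xy: "x = (s1, q1)" "y = (s2, q2)" by (cases x, cases y)
  note rc1 = rich_rc[OF P1] and rc2 = rich_rc[OF P2]
  have b1: "0 \<le> s1" "0 \<le> q1" "q1 \<le> 1" and b2: "0 \<le> s2" "0 \<le> q2" "q2 \<le> 1"
    using x y xy by (auto simp: pdom_iff)
  have nd1: "s1 < fst P1" "q1 = 0 \<Longrightarrow> s1 = 0"
    using rc_outcome_nondegenerate[OF rc1 x[unfolded xy] null1[unfolded xy]] by auto
  have nd2: "s2 < fst P2" "q2 = 0 \<Longrightarrow> s2 = 0"
    using rc_outcome_nondegenerate[OF rc2 y[unfolded xy] null2[unfolded xy]] by auto
  show ?thesis
  proof (cases "x = y")
    case True
    then show ?thesis by (simp add: ble_def)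
  next
    case False
    consider "s1 < s2 \<and> q1 < q2" | "s2 < s1 \<and> q2 < q1" | "s1 \<le> s2 \<and> q2 \<le> q1" | "s2 \<le> s1 \<and> q1 \<le> q2"
      by linarith
    then show ?thesis
    proof cases
      case 1
      then show ?thesis using xy by (simp add: ble_def bless_def)
    next
      case 2
      then have "snd P1 x y" using pref1 nd1 b2 xy by (simp add: pdom_iff)
      then have "strict (snd P2) x y"
        using rich_pref_mono_strict[OF P1 P2 \<open>fst P1 < fst P2\<close>, of y x] 2 xy
        by (simp add: bless_def)
      then show ?thesis using pref2 by (simp add: strict_def)
    next
      case 3
      then have "strict (snd P2) x y"
        using rc_strict_dominance[OF rc2, of s1 s2 q2 q1] b1 b2 nd1 nd2 xy False by simp
      then show ?thesis using pref2 by (simp add: strict_def)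
    next
      case 4
      then have "strict (snd P1) y x"
        using rc_strict_dominance[OF rc1, of s2 s1 q1 q2] b1 b2 nd1 nd2 xy False by auto
      moreover have "snd P1 x y" using pref1 4 nd1 b2 xy by (simp add: pdom_iff)
      ultimately show ?thesis by (simp add: strict_def)
    qed
  qed
qed

lemma order_converges_incseq_le:
  assumes "\<forall>n. S n \<in> D" and "incseq (\<lambda>n. fst (S n))" and "order_converges D S P"
  shows "fst (S n) \<le> fst P"
proof (rule ccontr)
  assume "\<not> ?thesis"
  then obtain N where "\<forall>m\<ge>N. fst (S m) < fst (S n)"
    using assms(1,3) unfolding order_converges_def eventually_sequentially by force
  then have "fst (S (max N n)) < fst (S n)" by simp
  moreover have "fst (S n) \<le> fst (S (max N n))" by (rule monoD[OF assms(2)]) simp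
  ultimately show False by simp
qed

lemma order_converges_decseq_ge:
  assumes "\<forall>n. S n \<in> D" and "decseq (\<lambda>n. fst (S n))" and "order_converges D S P"
  shows "fst P \<le> fst (S n)"
proof (rule ccontr)
  assume "\<not> ?thesis"
  then obtain N where "\<forall>m\<ge>N. fst (S n) < fst (S m)"
    using assms(1,3) unfolding order_converges_def eventually_sequentially by force
  then have "fst (S n) < fst (S (max N n))" by simp
  moreover have "fst (S (max N n)) \<le> fst (S n)" by (rule antimonoD[OF assms(2)]) simp
  ultimately show False by simp
qed

lemma order_converges_pdom_limit:
  assumes "P \<in> D" and "order_converges D S P" and "\<forall>\<^sub>F n in sequentially. z \<in> pdom (fst (S n))"
  shows "fst z \<le> fst P"
proof (rule ccontr)
  assume "\<not> ?thesis"
  moreover have "0 < fst P" using rc_pos[OF rich_rc[OF assms(1)]] .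
  ultimately have "0 < (fst P + fst z) / 2" by simp
  then obtain A where A: "A \<in> D" "fst A = (fst P + fst z) / 2" using rich_type_exists by blast
  then have "\<forall>\<^sub>F n in sequentially. fst (S n) < fst A"
    using assms(2) \<open>\<not> fst z \<le> fst P\<close> unfolding order_converges_def by auto
  with assms(3) have "\<forall>\<^sub>F n in sequentially. False"
    by eventually_elim (use A \<open>\<not> fst z \<le> fst P\<close> in \<open>auto simp: pdom_def\<close>)
  then show False by simp
qed

lemma order_converges_pref_smaller:
  assumes P: "P \<in> D" and S: "\<forall>n. S n \<in> D" and conv: "order_converges D S P"
    and less: "bless a b" and "a \<in> pdom (fst P)" "b \<in> pdom (fst P)"
    and approx: "\<forall>\<^sub>F n in sequentially. b \<in> pdom (fst (S n)) \<longrightarrow> snd (S n) a b"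
  shows "snd P a b"
proof -
  obtain \<tau> where \<tau>: "\<tau> \<in> D" "indiff (snd \<tau>) a b" using rich_indiff_type assms by blast
  show ?thesis
  proof (cases "fst P \<le> fst \<tau>")
    case True
    then show ?thesis
      using rich_pref_antimono[OF P \<tau>(1) True less] assms \<tau>(2) by (simp add: indiff_def)
  next
    case False
    have "b \<in> pdom (fst \<tau>)"
      using rc_field[OF rich_rc[OF \<tau>(1)], of a b] \<tau>(2) by (simp add: indiff_def)
    have "\<forall>\<^sub>F n in sequentially. fst \<tau> < fst (S n)"
      using conv \<tau>(1) False unfolding order_converges_def by simp
    with approx have "\<forall>\<^sub>F n in sequentially. False"
    proof eventually_elim
      case (elim n)
      then have "snd (S n) a b" using pdom_mono[OF \<open>b \<in> pdom (fst \<tau>)\<close>] by simp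
      moreover have "strict (snd (S n)) b a"
        using rich_pref_mono_strict[OF \<tau>(1) _ elim(2) less] S \<tau>(2) by (simp add: indiff_def)
      ultimately show False by (simp add: strict_def)
    qed
    then show ?thesis by simp
  qed
qed

lemma order_converges_pref_larger:
  assumes P: "P \<in> D" and S: "\<forall>n. S n \<in> D" and conv: "order_converges D S P"
    and less: "bless a b" and approx: "\<forall>\<^sub>F n in sequentially. snd (S n) b a"
  shows "snd P b a"
proof -
  obtain n where "snd (S n) b a" using approx unfolding eventually_sequentially by blast
  then have "a \<in> pdom (fst (S n))" "b \<in> pdom (fst (S n))" using rc_field[OF rich_rc] S by auto
  then obtain \<tau> where \<tau>: "\<tau> \<in> D" "indiff (snd \<tau>) a b" using rich_indiff_type less by blast
  show ?thesis
  proof (cases "fst \<tau> \<le> fst P")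
    case True
    then show ?thesis using rich_pref_mono[OF \<tau>(1) P True less] \<tau>(2) by (simp add: indiff_def)
  next
    case False
    have "\<forall>\<^sub>F n in sequentially. fst (S n) < fst \<tau>"
      using conv \<tau>(1) False unfolding order_converges_def by simp
    with approx have "\<forall>\<^sub>F n in sequentially. False"
    proof eventually_elim
      case (elim n)
      then have "b \<in> pdom (fst (S n))" using rc_field[OF rich_rc] S by blast
      then have "strict (snd (S n)) a b"
        using rich_pref_antimono_strict[OF _ \<tau>(1) elim(2) less] S \<tau>(2) by (simp add: indiff_def)
      then show False using elim(1) by (simp add: strict_def)
    qed
    then show ?thesis by simp
  qed
qed

end

section \<open>Mechanisms on an interval of types\<close>

locale mechanism = rich_domain +
  fixes lo hi :: pref and F :: "pref \<Rightarrow> bndl"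
  assumes lo: "lo \<in> D" and hi: "hi \<in> D"
    and mech: "is_mechanism (pref_interval D lo hi) F"
    and fin: "finite (F ` pref_interval D lo hi)"
begin

abbreviation Iv :: "pref set" where "Iv \<equiv> pref_interval D lo hi"

lemma Iv_subset: "Iv \<subseteq> D"
  unfolding pref_interval_def by auto

lemma Iv_type_bounds: "P \<in> Iv \<Longrightarrow> fst lo \<le> fst P \<and> fst P \<le> fst hi"
  unfolding pref_interval_def by auto

lemma Iv_type_exists: "fst lo \<le> t \<Longrightarrow> t \<le> fst hi \<Longrightarrow> \<exists>P\<in>Iv. fst P = t"
  using rich_type_exists[of t] rc_pos[OF rich_rc[OF lo]] unfolding pref_interval_def by force

lemma outcome_pdom: "P \<in> Iv \<Longrightarrow> F P \<in> pdom (fst P)"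
  using mech unfolding is_mechanism_def by blast

lemma monotone_mech_le:
  assumes "monotone_mech Iv F" "P \<in> Iv" "Q \<in> Iv" "fst P \<le> fst Q"
  shows "ble (F P) (F Q)"
proof (cases "fst P = fst Q")
  case True
  then have "P = Q" using rich_type_inj[of P Q] assms(2,3) Iv_subset by blast
  then show ?thesis by (simp add: ble_def)
next
  case False
  then show ?thesis using assms unfolding monotone_mech_def by simp
qed

lemma finite_outcome_range:
  assumes "\<forall>n. S n \<in> Iv"
  shows "finite (range (\<lambda>n. F (S n)))"
proof (rule finite_subset[OF _ fin])
  show "range (\<lambda>n. F (S n)) \<subseteq> F ` Iv" using assms by auto
qed

lemma sp_imp_monotone:
  assumes null: "\<forall>P\<in>Iv. indiff (snd P) (F P) (0, 0) \<longrightarrow> F P = (0, 0)"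
    and sp: "restricted_strategy_proof Iv F"
  shows "monotone_mech Iv F"
  unfolding monotone_mech_def
proof (intro ballI impI)
  fix P1 P2 assume P: "P1 \<in> Iv" "P2 \<in> Iv" and "fst P1 < fst P2"
  have "snd P2 (F P2) (F P1)"
    using sp P pdom_mono[OF outcome_pdom[OF P(1)]] \<open>fst P1 < fst P2\<close>
    unfolding restricted_strategy_proof_def by simp
  moreover have "F P2 \<in> pdom (fst P1) \<Longrightarrow> snd P1 (F P1) (F P2)"
    using sp P unfolding restricted_strategy_proof_def by simp
  moreover have "P1 \<in> D" "P2 \<in> D" using P Iv_subset by auto
  ultimately show "ble (F P1) (F P2)"
    using sp_pair_outcomes_ordered[OF _ _ \<open>fst P1 < fst P2\<close> outcome_pdom[OF P(1)]
        outcome_pdom[OF P(2)]] null P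
    by simp
qed

lemma sp_outcome_limit_from_below:
  assumes sp: "restricted_strategy_proof Iv F" and mono: "monotone_mech Iv F"
    and P: "P \<in> Iv" and S: "\<forall>n. S n \<in> Iv" and inc: "incseq (\<lambda>n. fst (S n))"
    and conv: "order_converges D S P"
  shows "\<exists>z. (\<forall>\<^sub>F n in sequentially. F (S n) = z) \<and> fst z \<le> fst P \<and> indiff (snd P) z (F P)"
proof -
  have SD: "\<forall>n. S n \<in> D" and PD: "P \<in> D" using S P Iv_subset by auto
  have le: "fst (S n) \<le> fst P" for n using order_converges_incseq_le[OF SD inc conv] .
  have "ble (F (S m)) (F (S n))" if "m \<le> n" for m n
    using monotone_mech_le[OF mono] S monoD[OF inc that] by blast
  then obtain N where N: "\<forall>n\<ge>N. F (S n) = F (S N)"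
    using ble_chain_eventually_const[OF finite_outcome_range[OF S]] by blast
  define z where "z = F (S N)"
  have ev: "\<forall>\<^sub>F n in sequentially. F (S n) = z"
    unfolding z_def eventually_sequentially using N by blast
  have zP: "z \<in> pdom (fst P)" unfolding z_def using pdom_mono[OF outcome_pdom le] S by blast
  have "indiff (snd P) z (F P)"
  proof (cases "z = F P")
    case True
    then show ?thesis using rc_refl[OF rich_rc[OF PD] zP] by (simp add: indiff_def)
  next
    case False
    moreover have "ble z (F P)" unfolding z_def using monotone_mech_le[OF mono _ P le] S by blast
    ultimately have less: "bless z (F P)" by (simp add: ble_def)
    have "snd P (F P) z"
      using sp P S zP unfolding restricted_strategy_proof_def z_def by blast
    moreover have "\<forall>\<^sub>F n in sequentially. F P \<in> pdom (fst (S n)) \<longrightarrow> snd (S n) z (F P)"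
      using ev by (rule eventually_mono) (use sp P S in \<open>auto simp: restricted_strategy_proof_def\<close>)
    then have "snd P z (F P)"
      by (rule order_converges_pref_smaller[OF PD SD conv less zP outcome_pdom[OF P]])
    ultimately show ?thesis by (simp add: indiff_def)
  qed
  moreover have "fst z \<le> fst P" using zP by (cases z) (simp add: pdom_iff)
  ultimately show ?thesis using ev by blast
qed

lemma sp_outcome_limit_from_above:
  assumes sp: "restricted_strategy_proof Iv F" and mono: "monotone_mech Iv F"
    and P: "P \<in> Iv" and S: "\<forall>n. S n \<in> Iv" and dec: "decseq (\<lambda>n. fst (S n))"
    and conv: "order_converges D S P"
  shows "\<exists>z. (\<forall>\<^sub>F n in sequentially. F (S n) = z) \<and> fst z \<le> fst P \<and> indiff (snd P) z (F P)"
proof -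
  have SD: "\<forall>n. S n \<in> D" and PD: "P \<in> D" using S P Iv_subset by auto
  have ge: "fst P \<le> fst (S n)" for n using order_converges_decseq_ge[OF SD dec conv] .
  have "ble (F (S n)) (F (S m))" if "m \<le> n" for m n
    using monotone_mech_le[OF mono] S antimonoD[OF dec that] by blast
  then obtain N where N: "\<forall>n\<ge>N. F (S n) = F (S N)"
    using ble_chain_eventually_const[OF finite_outcome_range[OF S]] by blast
  define z where "z = F (S N)"
  have ev: "\<forall>\<^sub>F n in sequentially. F (S n) = z"
    unfolding z_def eventually_sequentially using N by blast
  have "\<forall>\<^sub>F n in sequentially. z \<in> pdom (fst (S n))"
    using ev by (rule eventually_mono) (use outcome_pdom S in metis)
  then have "fst z \<le> fst P" by (rule order_converges_pdom_limit[OF PD conv])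
  moreover have "z \<in> pdom (fst (S N))" unfolding z_def using outcome_pdom S by blast
  ultimately have zP: "z \<in> pdom (fst P)" by (cases z) (simp add: pdom_iff)
  have "indiff (snd P) z (F P)"
  proof (cases "z = F P")
    case True
    then show ?thesis using rc_refl[OF rich_rc[OF PD] zP] by (simp add: indiff_def)
  next
    case False
    moreover have "ble (F P) z" unfolding z_def using monotone_mech_le[OF mono P _ ge] S by blast
    ultimately have less: "bless (F P) z" by (simp add: ble_def)
    have "snd P (F P) z" using sp P S zP unfolding restricted_strategy_proof_def z_def by blast
    moreover have "\<forall>\<^sub>F n in sequentially. snd (S n) z (F P)"
      using ev by (rule eventually_mono)
        (use sp P S pdom_mono[OF outcome_pdom[OF P] ge] in \<open>auto simp: restricted_strategy_proof_def\<close>)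
    then have "snd P z (F P)" by (rule order_converges_pref_larger[OF PD SD conv less])
    ultimately show ?thesis by (simp add: indiff_def)
  qed
  then show ?thesis using ev \<open>fst z \<le> fst P\<close> by blast
qed

lemma sp_imp_VF_continuous:
  assumes sp: "restricted_strategy_proof Iv F" and mono: "monotone_mech Iv F"
  shows "VF_continuous D Iv F"
  unfolding VF_continuous_def
proof (intro ballI allI impI)
  fix P S assume P: "P \<in> Iv" and S: "\<forall>n. S n \<in> Iv"
    and monoseq: "(\<forall>n. fst (S n) \<le> fst (S (Suc n))) \<or> (\<forall>n. fst (S (Suc n)) \<le> fst (S n))"
    and conv: "order_converges D S P"
  from monoseq have
    "\<exists>z. (\<forall>\<^sub>F n in sequentially. F (S n) = z) \<and> fst z \<le> fst P \<and> indiff (snd P) z (F P)"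
  proof
    assume "\<forall>n. fst (S n) \<le> fst (S (Suc n))"
    then show ?thesis
      by (intro sp_outcome_limit_from_below[OF sp mono P S _ conv]) (simp add: incseq_Suc_iff)
  next
    assume "\<forall>n. fst (S (Suc n)) \<le> fst (S n)"
    then show ?thesis
      by (intro sp_outcome_limit_from_above[OF sp mono P S _ conv]) (simp add: decseq_Suc_iff)
  qed
  then obtain z where "\<forall>\<^sub>F n in sequentially. F (S n) = z" "fst z \<le> fst P" "indiff (snd P) z (F P)"
    by blast
  then show "\<exists>z. (\<lambda>n. F (S n)) \<longlonglongrightarrow> z \<and> fst z \<le> fst P \<and> indiff (snd P) z (F P)"
    by (intro exI[of _ z] conjI tendsto_eventually)
qed

lemma Iv_approach_from_above:
  assumes "b < c" "fst lo \<le> b" "c \<le> fst hi"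
  obtains S where "\<forall>n. S n \<in> Iv \<and> b < fst (S n) \<and> fst (S n) \<le> c"
    and "\<forall>n. fst (S (Suc n)) \<le> fst (S n)" and "(\<lambda>n. fst (S n)) \<longlonglongrightarrow> b"
proof -
  obtain \<sigma> where \<sigma>: "\<forall>n. b < \<sigma> n \<and> \<sigma> n \<le> c \<and> \<sigma> (Suc n) \<le> \<sigma> n" "\<sigma> \<longlonglongrightarrow> b"
    using approach_from_above[OF assms(1)] by blast
  have "\<exists>P\<in>Iv. fst P = \<sigma> n" for n using \<sigma>(1)[rule_format, of n] assms by (intro Iv_type_exists) auto
  then obtain S where S: "\<forall>n. S n \<in> Iv \<and> fst (S n) = \<sigma> n" by metis
  show thesis by (rule that[of S]) (use S \<sigma> in simp_all)
qed

lemma Iv_approach_from_below: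
  assumes "a < b" "fst lo \<le> a" "b \<le> fst hi"
  obtains S where "\<forall>n. S n \<in> Iv \<and> a \<le> fst (S n) \<and> fst (S n) < b"
    and "\<forall>n. fst (S n) \<le> fst (S (Suc n))" and "(\<lambda>n. fst (S n)) \<longlonglongrightarrow> b"
proof -
  obtain \<sigma> where \<sigma>: "\<forall>n. a \<le> \<sigma> n \<and> \<sigma> n < b \<and> \<sigma> n \<le> \<sigma> (Suc n)" "\<sigma> \<longlonglongrightarrow> b"
    using approach_from_below[OF assms(1)] by blast
  have "\<exists>P\<in>Iv. fst P = \<sigma> n" for n using \<sigma>(1)[rule_format, of n] assms by (intro Iv_type_exists) auto
  then obtain S where S: "\<forall>n. S n \<in> Iv \<and> fst (S n) = \<sigma> n" by metis
  show thesis by (rule that[of S]) (use S \<sigma> in simp_all)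
qed

lemma VF_continuous_eventually_indiff:
  assumes vc: "VF_continuous D Iv F" and B: "B \<in> Iv" and S: "\<forall>n. S n \<in> Iv"
    and monoseq: "(\<forall>n. fst (S n) \<le> fst (S (Suc n))) \<or> (\<forall>n. fst (S (Suc n)) \<le> fst (S n))"
    and lim: "(\<lambda>n. fst (S n)) \<longlonglongrightarrow> fst B"
  obtains z where "\<forall>\<^sub>F n in sequentially. F (S n) = z" and "indiff (snd B) z (F B)"
proof -
  have "order_converges D S B" unfolding order_converges_def using order_tendstoD[OF lim] by simp
  then obtain z where z: "(\<lambda>n. F (S n)) \<longlonglongrightarrow> z" "indiff (snd B) z (F B)"
    using vc B S monoseq unfolding VF_continuous_def by blast
  have "\<forall>\<^sub>F n in sequentially. F (S n) = z"
    by (rule tendsto_finite_range_eventually_eq[OF fin _ z(1)]) (use S in simp)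
  then show thesis using that z(2) by blast
qed

lemma level_set_sup:
  assumes mono: "monotone_mech Iv F" and u0: "u0 \<in> Iv" and C: "C \<in> Iv" and "fst u0 \<le> fst C"
  obtains B where "B \<in> Iv" and "fst u0 \<le> fst B" and "fst B \<le> fst C"
    and "\<And>u. u \<in> Iv \<Longrightarrow> fst u0 \<le> fst u \<Longrightarrow> fst u < fst B \<Longrightarrow> F u = F u0"
    and "\<And>u. u \<in> Iv \<Longrightarrow> fst B < fst u \<Longrightarrow> fst u \<le> fst C \<Longrightarrow> F u \<noteq> F u0"
proof -
  define W where "W = {fst u | u. u \<in> Iv \<and> fst u \<le> fst C \<and> F u = F u0}"
  have u0W: "fst u0 \<in> W" using u0 assms(4) unfolding W_def by blast
  have bdd: "bdd_above W" unfolding W_def by (rule bdd_aboveI[of _ "fst C"]) auto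
  have "fst u0 \<le> Sup W" using cSup_upper[OF u0W bdd] .
  moreover have "Sup W \<le> fst C" using u0W by (intro cSup_least) (auto simp: W_def)
  ultimately have "fst lo \<le> Sup W" "Sup W \<le> fst hi"
    using Iv_type_bounds[OF u0] Iv_type_bounds[OF C] by auto
  then obtain B where B: "B \<in> Iv" "fst B = Sup W" using Iv_type_exists by blast
  show thesis
  proof (rule that[OF B(1)])
    show "fst u0 \<le> fst B" "fst B \<le> fst C" using B(2) \<open>fst u0 \<le> Sup W\<close> \<open>Sup W \<le> fst C\<close> by simp_all
  next
    fix u assume u: "u \<in> Iv" "fst u0 \<le> fst u" "fst u < fst B"
    then obtain u' where u': "u' \<in> Iv" "F u' = F u0" "fst u < fst u'"
      using less_cSup_iff[OF _ bdd] u0W B(2) unfolding W_def by force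
    show "F u = F u0"
      using monotone_mech_le[OF mono u0 u(1,2)] monotone_mech_le[OF mono u(1) u'(1)] u'(2,3)
      by (intro ble_antisym) simp_all
  next
    fix u assume u: "u \<in> Iv" "fst B < fst u" "fst u \<le> fst C"
    show "F u \<noteq> F u0"
    proof
      assume "F u = F u0"
      then have "fst u \<in> W" using u unfolding W_def by blast
      then show False using cSup_upper[OF _ bdd] u(2) B(2) by force
    qed
  qed
qed

lemma level_set_inf:
  assumes mono: "monotone_mech Iv F" and u0: "u0 \<in> Iv" and C: "C \<in> Iv" and "fst C \<le> fst u0"
  obtains B where "B \<in> Iv" and "fst C \<le> fst B" and "fst B \<le> fst u0"
    and "\<And>u. u \<in> Iv \<Longrightarrow> fst B < fst u \<Longrightarrow> fst u \<le> fst u0 \<Longrightarrow> F u = F u0"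
    and "\<And>u. u \<in> Iv \<Longrightarrow> fst C \<le> fst u \<Longrightarrow> fst u < fst B \<Longrightarrow> F u \<noteq> F u0"
proof -
  define W where "W = {fst u | u. u \<in> Iv \<and> fst C \<le> fst u \<and> F u = F u0}"
  have u0W: "fst u0 \<in> W" using u0 assms(4) unfolding W_def by blast
  have bdd: "bdd_below W" unfolding W_def by (rule bdd_belowI[of _ "fst C"]) auto
  have "Inf W \<le> fst u0" using cInf_lower[OF u0W bdd] .
  moreover have "fst C \<le> Inf W" using u0W by (intro cInf_greatest) (auto simp: W_def)
  ultimately have "fst lo \<le> Inf W" "Inf W \<le> fst hi"
    using Iv_type_bounds[OF u0] Iv_type_bounds[OF C] by auto
  then obtain B where B: "B \<in> Iv" "fst B = Inf W" using Iv_type_exists by blast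
  show thesis
  proof (rule that[OF B(1)])
    show "fst C \<le> fst B" "fst B \<le> fst u0" using B(2) \<open>Inf W \<le> fst u0\<close> \<open>fst C \<le> Inf W\<close> by simp_all
  next
    fix u assume u: "u \<in> Iv" "fst B < fst u" "fst u \<le> fst u0"
    then obtain u' where u': "u' \<in> Iv" "F u' = F u0" "fst u' < fst u"
      using cInf_less_iff[OF _ bdd] u0W B(2) unfolding W_def by force
    show "F u = F u0"
      using monotone_mech_le[OF mono u(1) u0 u(3)] monotone_mech_le[OF mono u'(1) u(1)] u'(2,3)
      by (intro ble_antisym) simp_all
  next
    fix u assume u: "u \<in> Iv" "fst C \<le> fst u" "fst u < fst B"
    show "F u \<noteq> F u0"
    proof
      assume "F u = F u0"
      then have "fst u \<in> W" using u unfolding W_def by blast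
      then show False using cInf_lower[OF _ bdd] u(3) B(2) by force
    qed
  qed
qed

lemma level_exit_above:
  assumes mono: "monotone_mech Iv F" and vc: "VF_continuous D Iv F"
    and u0: "u0 \<in> Iv" and C: "C \<in> Iv" and "fst u0 \<le> fst C" and "F C \<noteq> F u0"
  obtains B u where "B \<in> Iv" "u \<in> Iv" "fst B \<le> fst C" "fst u \<le> fst C"
    and "bless (F u0) (F u)" and "indiff (snd B) (F u0) (F u)"
proof -
  obtain B where B: "B \<in> Iv" and b: "fst u0 \<le> fst B" "fst B \<le> fst C"
    "\<And>u. u \<in> Iv \<Longrightarrow> fst u0 \<le> fst u \<Longrightarrow> fst u < fst B \<Longrightarrow> F u = F u0"
    "\<And>u. u \<in> Iv \<Longrightarrow> fst B < fst u \<Longrightarrow> fst u \<le> fst C \<Longrightarrow> F u \<noteq> F u0"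
    using level_set_sup[OF mono u0 C \<open>fst u0 \<le> fst C\<close>] by blast
  show thesis
  proof (cases "F B = F u0")
    case True
    have "fst B < fst C" using rich_type_inj[of B C] B C Iv_subset b(2) True \<open>F C \<noteq> F u0\<close> by force
    then obtain S where S: "\<forall>n. S n \<in> Iv \<and> fst B < fst (S n) \<and> fst (S n) \<le> fst C"
      and dec: "\<forall>n. fst (S (Suc n)) \<le> fst (S n)" and lim: "(\<lambda>n. fst (S n)) \<longlonglongrightarrow> fst B"
      using Iv_approach_from_above Iv_type_bounds[OF B] Iv_type_bounds[OF C] by blast
    obtain z where ev: "\<forall>\<^sub>F n in sequentially. F (S n) = z" and z: "indiff (snd B) z (F B)"
      using VF_continuous_eventually_indiff[OF vc B, of S] S dec lim by auto
    then obtain n where n: "F (S n) = z" unfolding eventually_sequentially by blast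
    have "ble (F B) (F (S n))"
      using monotone_mech_le[OF mono B, of "S n"] S[rule_format, of n] by simp
    moreover have "F (S n) \<noteq> F u0" using b(4) S by blast
    ultimately have "bless (F u0) (F (S n))" using True by (simp add: ble_def)
    moreover have "indiff (snd B) (F u0) (F (S n))" using z n True by (simp add: indiff_sym)
    ultimately show thesis using that[OF B, of "S n"] S b(2) by simp
  next
    case False
    have "fst u0 < fst B" using rich_type_inj[of B u0] B u0 Iv_subset b(1) False by force
    then obtain S where S: "\<forall>n. S n \<in> Iv \<and> fst u0 \<le> fst (S n) \<and> fst (S n) < fst B"
      and inc: "\<forall>n. fst (S n) \<le> fst (S (Suc n))" and lim: "(\<lambda>n. fst (S n)) \<longlonglongrightarrow> fst B"
      using Iv_approach_from_below Iv_type_bounds[OF u0] Iv_type_bounds[OF B] by blast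
    obtain z where ev: "\<forall>\<^sub>F n in sequentially. F (S n) = z" and z: "indiff (snd B) z (F B)"
      using VF_continuous_eventually_indiff[OF vc B, of S] S inc lim by auto
    moreover have "F (S n) = F u0" for n using b(3) S by blast
    ultimately have "indiff (snd B) (F u0) (F B)" unfolding eventually_sequentially by auto
    moreover have "ble (F u0) (F B)" using monotone_mech_le[OF mono u0 B] b(1) by simp
    ultimately show thesis using that[of B B] B False b(2) by (simp add: ble_def)
  qed
qed

lemma level_exit_below:
  assumes mono: "monotone_mech Iv F" and vc: "VF_continuous D Iv F"
    and u0: "u0 \<in> Iv" and C: "C \<in> Iv" and "fst C \<le> fst u0" and "F C \<noteq> F u0"
  obtains B u where "B \<in> Iv" "u \<in> Iv" "fst C \<le> fst B" "fst C \<le> fst u"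
    and "bless (F u) (F u0)" and "indiff (snd B) (F u) (F u0)"
proof -
  obtain B where B: "B \<in> Iv" and b: "fst C \<le> fst B" "fst B \<le> fst u0"
    "\<And>u. u \<in> Iv \<Longrightarrow> fst B < fst u \<Longrightarrow> fst u \<le> fst u0 \<Longrightarrow> F u = F u0"
    "\<And>u. u \<in> Iv \<Longrightarrow> fst C \<le> fst u \<Longrightarrow> fst u < fst B \<Longrightarrow> F u \<noteq> F u0"
    using level_set_inf[OF mono u0 C \<open>fst C \<le> fst u0\<close>] by blast
  show thesis
  proof (cases "F B = F u0")
    case True
    have "fst C < fst B" using rich_type_inj[of B C] B C Iv_subset b(1) True \<open>F C \<noteq> F u0\<close> by force
    then obtain S where S: "\<forall>n. S n \<in> Iv \<and> fst C \<le> fst (S n) \<and> fst (S n) < fst B"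
      and inc: "\<forall>n. fst (S n) \<le> fst (S (Suc n))" and lim: "(\<lambda>n. fst (S n)) \<longlonglongrightarrow> fst B"
      using Iv_approach_from_below Iv_type_bounds[OF C] Iv_type_bounds[OF B] by blast
    obtain z where ev: "\<forall>\<^sub>F n in sequentially. F (S n) = z" and z: "indiff (snd B) z (F B)"
      using VF_continuous_eventually_indiff[OF vc B, of S] S inc lim by auto
    then obtain n where n: "F (S n) = z" unfolding eventually_sequentially by blast
    have "ble (F (S n)) (F B)"
      using monotone_mech_le[OF mono _ B, of "S n"] S[rule_format, of n] by simp
    moreover have "F (S n) \<noteq> F u0" using b(4) S by blast
    ultimately have "bless (F (S n)) (F u0)" using True by (simp add: ble_def)
    moreover have "indiff (snd B) (F (S n)) (F u0)" using z n True by simp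
    ultimately show thesis using that[OF B, of "S n"] S b(1) by simp
  next
    case False
    have "fst B < fst u0" using rich_type_inj[of B u0] B u0 Iv_subset b(2) False by force
    then obtain S where S: "\<forall>n. S n \<in> Iv \<and> fst B < fst (S n) \<and> fst (S n) \<le> fst u0"
      and dec: "\<forall>n. fst (S (Suc n)) \<le> fst (S n)" and lim: "(\<lambda>n. fst (S n)) \<longlonglongrightarrow> fst B"
      using Iv_approach_from_above Iv_type_bounds[OF B] Iv_type_bounds[OF u0] by blast
    obtain z where ev: "\<forall>\<^sub>F n in sequentially. F (S n) = z" and z: "indiff (snd B) z (F B)"
      using VF_continuous_eventually_indiff[OF vc B, of S] S dec lim by auto
    moreover have "F (S n) = F u0" for n using b(3) S by blast
    ultimately have "indiff (snd B) (F B) (F u0)"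
      unfolding eventually_sequentially by (auto intro: indiff_sym)
    moreover have "ble (F B) (F u0)" using monotone_mech_le[OF mono B u0] b(2) by simp
    ultimately show thesis using that[of B B] B False b(1) by (simp add: ble_def)
  qed
qed

lemma no_gain_from_lower_report:
  assumes mono: "monotone_mech Iv F" and vc: "VF_continuous D Iv F"
    and P: "P \<in> Iv" and P': "P' \<in> Iv" and "fst P' < fst P"
  shows "snd P (F P) (F P')"
proof (rule ccontr)
  assume not_sp: "\<not> snd P (F P) (F P')"
  note rc = rich_rc[OF subsetD[OF Iv_subset P]]
  have affordable: "u \<in> Iv \<Longrightarrow> fst u \<le> fst P \<Longrightarrow> F u \<in> pdom (fst P)" for u
    using pdom_mono[OF outcome_pdom] by blast
  define Bd where "Bd = {u \<in> Iv. fst u \<le> fst P \<and> strict (snd P) (F u) (F P)}"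
  have "P' \<in> Bd"
    using rc_total[OF rc affordable[OF P'] outcome_pdom[OF P]] not_sp P' \<open>fst P' < fst P\<close>
    unfolding Bd_def strict_def by auto
  moreover have "finite ((\<lambda>u. fst (F u)) ` Bd)"
    by (rule finite_subset[OF _ finite_imageI[OF fin, of fst]]) (auto simp: Bd_def)
  ultimately obtain u0 where u0: "u0 \<in> Bd" and max: "\<And>u. u \<in> Bd \<Longrightarrow> fst (F u) \<le> fst (F u0)"
    using finite_image_has_max by metis
  have u0': "u0 \<in> Iv" "fst u0 \<le> fst P" "strict (snd P) (F u0) (F P)"
    using u0 unfolding Bd_def by auto
  then have "F P \<noteq> F u0" unfolding strict_def by auto
  then obtain B u where B: "B \<in> Iv" "u \<in> Iv" "fst B \<le> fst P" "fst u \<le> fst P"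
    and less: "bless (F u0) (F u)" and ind: "indiff (snd B) (F u0) (F u)"
    using level_exit_above[OF mono vc u0'(1) P u0'(2)] by metis
  have "u \<notin> Bd" using max[of u] less by (auto simp: bless_def)
  then have "snd P (F P) (F u)"
    using rc_total[OF rc affordable[OF B(2,4)] outcome_pdom[OF P]] B unfolding Bd_def strict_def
    by auto
  moreover have "snd P (F u) (F u0)"
    using rich_pref_mono[OF subsetD[OF Iv_subset B(1)] subsetD[OF Iv_subset P] B(3) less] ind
    by (simp add: indiff_def)
  ultimately show False using rc_trans[OF rc] u0'(3) unfolding strict_def by blast
qed

lemma no_gain_from_higher_report:
  assumes mono: "monotone_mech Iv F" and vc: "VF_continuous D Iv F"
    and P: "P \<in> Iv" and P': "P' \<in> Iv" and "fst P < fst P'" and "F P' \<in> pdom (fst P)"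
  shows "snd P (F P) (F P')"
proof (rule ccontr)
  assume not_sp: "\<not> snd P (F P) (F P')"
  note rc = rich_rc[OF subsetD[OF Iv_subset P]]
  define Bd where "Bd = {u \<in> Iv. fst P \<le> fst u \<and> F u \<in> pdom (fst P) \<and> strict (snd P) (F u) (F P)}"
  have "P' \<in> Bd"
    using rc_total[OF rc \<open>F P' \<in> pdom (fst P)\<close> outcome_pdom[OF P]] not_sp P' \<open>fst P < fst P'\<close>
      \<open>F P' \<in> pdom (fst P)\<close> unfolding Bd_def strict_def by auto
  moreover have "finite ((\<lambda>u. fst (F u)) ` Bd)"
    by (rule finite_subset[OF _ finite_imageI[OF fin, of fst]]) (auto simp: Bd_def)
  ultimately obtain u0 where u0: "u0 \<in> Bd" and min: "\<And>u. u \<in> Bd \<Longrightarrow> fst (F u0) \<le> fst (F u)"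
    using finite_image_has_min by metis
  have u0': "u0 \<in> Iv" "fst P \<le> fst u0" "F u0 \<in> pdom (fst P)" "strict (snd P) (F u0) (F P)"
    using u0 unfolding Bd_def by auto
  then have "F P \<noteq> F u0" unfolding strict_def by auto
  then obtain B u where B: "B \<in> Iv" "u \<in> Iv" "fst P \<le> fst B" "fst P \<le> fst u"
    and less: "bless (F u) (F u0)" and ind: "indiff (snd B) (F u) (F u0)"
    using level_exit_below[OF mono vc u0'(1) P u0'(2)] by metis
  have affordable: "F u \<in> pdom (fst P)" using pdom_bless[OF less outcome_pdom[OF B(2)] u0'(3)] .
  have "u \<notin> Bd" using min[of u] less by (auto simp: bless_def)
  then have "snd P (F P) (F u)"
    using rc_total[OF rc affordable outcome_pdom[OF P]] B affordable unfolding Bd_def strict_def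
    by auto
  moreover have "snd P (F u) (F u0)"
    using rich_pref_antimono[OF subsetD[OF Iv_subset P] subsetD[OF Iv_subset B(1)] B(3) less u0'(3)]
      ind by (simp add: indiff_def)
  ultimately show False using rc_trans[OF rc] u0'(4) unfolding strict_def by blast
qed

lemma mono_VF_continuous_imp_sp:
  assumes mono: "monotone_mech Iv F" and vc: "VF_continuous D Iv F"
  shows "restricted_strategy_proof Iv F"
  unfolding restricted_strategy_proof_def
proof (intro ballI impI)
  fix P P' assume P: "P \<in> Iv" and P': "P' \<in> Iv" and "F P' \<in> pdom (fst P)"
  consider "fst P' < fst P" | "fst P' = fst P" | "fst P < fst P'" by linarith
  then show "snd P (F P) (F P')"
  proof cases
    case 1
    then show ?thesis by (rule no_gain_from_lower_report[OF mono vc P P'])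
  next
    case 2
    then have "P' = P" using rich_type_inj[of P' P] P P' Iv_subset by blast
    then show ?thesis using rc_refl[OF rich_rc outcome_pdom[OF P]] P Iv_subset by blast
  next
    case 3
    then show ?thesis by (rule no_gain_from_higher_report[OF mono vc P P' _ \<open>F P' \<in> pdom (fst P)\<close>])
  qed
qed

end

theorem mainTheorem17:
  fixes D :: "pref set" and lo hi :: pref and F :: "pref \<Rightarrow> bndl"
  assumes "rich_single_crossing_domain D"
    and "lo \<in> D" and "hi \<in> D"
    and "is_mechanism (pref_interval D lo hi) F"
    and "finite (F ` pref_interval D lo hi)"
    and "\<forall>P\<in>pref_interval D lo hi. indiff (snd P) (F P) (0, 0) \<longrightarrow> F P = (0, 0)"
  shows "restricted_strategy_proof (pref_interval D lo hi) F \<longleftrightarrow>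
         monotone_mech (pref_interval D lo hi) F \<and> VF_continuous D (pref_interval D lo hi) F"
proof -
  interpret mechanism D lo hi F
    by unfold_locales (fact assms)+
  show ?thesis
    using sp_imp_monotone[OF assms(6)] sp_imp_VF_continuous mono_VF_continuous_imp_sp by blast
qed

end
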